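(* Let $|\cdot|:\mathbb{Q}\to R$ be a non-archimedean multiplicative generalized seminorm on $\mathbb{Q}$ with trivial kernel. Then $|\cdot|$ is equivalent either to the $p$-adic valuation $|\cdot|_p:\mathbb{Q}\to R_{p^{\mathbb{Z}}}$ for some prime number $p$, or to the trivial valuation $|\cdot|_0:\mathbb{Q}\to\{0,1\}$.
   Context: A halo is a commutative unital semiring with a partial order compatible with $+$ and $\cdot$; an aura is a halo whose semiring is a semifield; positive means $0<1$. A generalized seminorm on a ring $A$ is a map $|\cdot|:A\to R$ into a positive totally ordered aura with $|0|=0,|1|=1$, $|a+b|\le|a|+|b|$, $|ab|\le|a||b|$; multiplicative if $|ab|=|a||b|$; non-archimedean if $|a+b|\le\max(|a|,|b|)$. Two seminorms $|\cdot|_1,|\cdot|_2$ on $A$ are equivalent if for all $a,b\in A$: $|a|_1\le|b|_1\iff|a|_2\le|b|_2$. For a totally ordered multiplicative group $\Gamma$, $R_\Gamma=\{0\}\cup\Gamma$ with $0$ smallest and absorbing and addition $\max$. $R_{p^{\mathbb{Z}}}$ uses $\Gamma=p^{\mathbb{Z}}\subset\mathbb{Q}_{>0}$ with its usual order, $|x|_p=p^{-\mathrm{ord}_p(x)}$ for $x\neq0$; $\{0,1\}=R_{\{1\}}$ and $|x|_0=1$ for $x\neq0$, $|0|_0=0$. *)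

theory Defs
  imports Complex_Main "HOL-Computational_Algebra.Primes"
begin

class pos_tot_aura = comm_semiring_1 + linorder +
  assumes aura_add_mono: "a \<le> b \<Longrightarrow> a + c \<le> b + c"
    and aura_mult_mono: "a \<le> b \<Longrightarrow> a * c \<le> b * c"
    and aura_inverse_ex: "a \<noteq> 0 \<Longrightarrow> \<exists>b. a * b = 1"
    and aura_zero_less_one: "0 < 1"

definition gen_seminorm :: "(rat \<Rightarrow> 'r::pos_tot_aura) \<Rightarrow> bool" where
  "gen_seminorm N \<longleftrightarrow> N 0 = 0 \<and> N 1 = 1
     \<and> (\<forall>a b. N (a + b) \<le> N a + N b) \<and> (\<forall>a b. N (a * b) \<le> N a * N b)"

definition multiplicative :: "(rat \<Rightarrow> 'r::pos_tot_aura) \<Rightarrow> bool" where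
  "multiplicative N \<longleftrightarrow> (\<forall>a b. N (a * b) = N a * N b)"

definition non_archimedean :: "(rat \<Rightarrow> 'r::pos_tot_aura) \<Rightarrow> bool" where
  "non_archimedean N \<longleftrightarrow> (\<forall>a b. N (a + b) \<le> max (N a) (N b))"

definition trivial_kernel :: "(rat \<Rightarrow> 'r::pos_tot_aura) \<Rightarrow> bool" where
  "trivial_kernel N \<longleftrightarrow> (\<forall>a. N a = 0 \<longrightarrow> a = 0)"

definition seminorm_equiv :: "(rat \<Rightarrow> 'r::linorder) \<Rightarrow> (rat \<Rightarrow> 's::linorder) \<Rightarrow> bool" where
  "seminorm_equiv N1 N2 \<longleftrightarrow> (\<forall>a b. N1 a \<le> N1 b \<longleftrightarrow> N2 a \<le> N2 b)"

text \<open>p-adic order of a rational number (for x \<noteq> 0).\<close>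
definition ord_p :: "nat \<Rightarrow> rat \<Rightarrow> int" where
  "ord_p p x = (case quotient_of x of (a, b) \<Rightarrow>
      int (multiplicity (int p) a) - int (multiplicity (int p) b))"

text \<open>p-adic absolute value |x|_p = p^(-ord_p x), with values in
  R_{p^Z} = {0} \<union> p^Z \<subseteq> Q_{\<ge>0} (order inherited from Q).\<close>
definition padic_abs :: "nat \<Rightarrow> rat \<Rightarrow> rat" where
  "padic_abs p x = (if x = 0 then 0 else (of_nat p :: rat) powi (- ord_p p x))"

definition trivial_abs :: "rat \<Rightarrow> rat" where
  "trivial_abs x = (if x = 0 then 0 else 1)"

end

theory Submission
  imports Defs
begin

text \<open>The integers n with |n| < 1 form an ideal of \<int> (by the ultrametric inequality and
  |n| \<le> 1 on \<int>), which is prime (by multiplicativity) and proper. If it is zero, |.| is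
  trivial on \<int> and hence on \<rat>; otherwise it is p\<int> for a prime p, so |x| \<le> 1 exactly when
  ord_p x \<ge> 0. Since |x| \<le> |y| iff |x/y| \<le> 1, this determines the order of |.|, which is
  therefore that of |.|_p.\<close>

lemma aura_nonneg: "0 \<le> (a::'a::pos_tot_aura)"
  using aura_mult_mono[of 0 1 a] less_imp_le[OF aura_zero_less_one] by simp

lemma aura_mult_left_le_one_le: "y \<le> 1 \<Longrightarrow> y * x \<le> (x::'a::pos_tot_aura)"
  using aura_mult_mono[of y 1 x] by simp

lemma aura_mult_le_cancel_right:
  fixes a b c :: "'a::pos_tot_aura"
  assumes "c \<noteq> 0"
  shows "a * c \<le> b * c \<longleftrightarrow> a \<le> b"
proof
  obtain d where d: "c * d = 1" using aura_inverse_ex assms by blast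
  assume "a * c \<le> b * c"
  then have "a * c * d \<le> b * c * d" by (rule aura_mult_mono)
  then show "a \<le> b" using d by (simp add: mult.assoc)
qed (rule aura_mult_mono)

lemma aura_square_eq_one_iff: "u * u = 1 \<longleftrightarrow> u = (1::'a::pos_tot_aura)"
proof
  assume uu: "u * u = 1"
  then have "u \<noteq> 0" by auto
  then have "u \<le> 1 \<longleftrightarrow> 1 \<le> u"
    using aura_mult_le_cancel_right[of u u 1] aura_mult_le_cancel_right[of u 1 u] uu by simp
  then show "u = 1" by auto
qed simp

lemma int_prime_ideal_eq_dvd:
  fixes I :: "int \<Rightarrow> bool"
  assumes add: "\<And>a b. I a \<Longrightarrow> I b \<Longrightarrow> I (a + b)"
    and mult: "\<And>a b. I a \<Longrightarrow> I (a * b)"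
    and prime: "\<And>a b. I (a * b) \<Longrightarrow> I a \<or> I b"
    and proper: "\<not> I 1"
    and nonzero: "I n" "n \<noteq> 0"
  shows "\<exists>p. prime p \<and> (\<forall>k. I k \<longleftrightarrow> int p dvd k)"
proof -
  define S where "S = {m::nat. 0 < m \<and> I (int m)}"
  have "nat \<bar>n\<bar> \<in> S"
    using nonzero mult[of n "sgn n"] by (simp add: S_def flip: abs_sgn)
  define p where "p = (LEAST m. m \<in> S)"
  have "p \<in> S" unfolding p_def using \<open>nat \<bar>n\<bar> \<in> S\<close> by (rule LeastI)
  then have p_pos: "0 < p" and I_p: "I (int p)" by (auto simp: S_def)
  have dvd_iff: "I k \<longleftrightarrow> int p dvd k" for k
  proof
    assume "I k"
    define r where "r = k mod int p"
    have "r = k + int p * (- (k div int p))"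
      unfolding r_def by (metis minus_mult_div_eq_mod diff_conv_add_uminus mult_minus_right)
    then have "I r" using add[OF \<open>I k\<close> mult[OF I_p, of "- (k div int p)"]] by (simp only:)
    have r_bounds: "0 \<le> r" "r < int p" using p_pos by (simp_all add: r_def)
    show "int p dvd k"
    proof (rule ccontr)
      assume "\<not> int p dvd k"
      then have "r \<noteq> 0" by (simp add: r_def dvd_eq_mod_eq_0)
      then have "nat r \<in> S" using \<open>I r\<close> r_bounds by (simp add: S_def)
      then have "p \<le> nat r" unfolding p_def by (rule Least_le)
      then show False using r_bounds by simp
    qed
  next
    assume "int p dvd k"
    then show "I k" using mult[OF I_p] by auto
  qed
  have "prime (int p)"
  proof (rule primeI[OF prime_elemI])
    show "\<not> int p dvd 1" using proper dvd_iff by blast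
    show "int p dvd a \<or> int p dvd b" if "int p dvd a * b" for a b
      using that prime dvd_iff by blast
  qed (use p_pos in auto)
  then show ?thesis using dvd_iff by auto
qed

lemma ord_p_of_int_div:
  assumes p: "prime p" and a: "a \<noteq> 0" and b: "b \<noteq> 0"
  shows "ord_p p (of_int a / of_int b) = int (multiplicity (int p) a) - int (multiplicity (int p) b)"
proof -
  obtain a' b' where q: "quotient_of (of_int a / of_int b) = (a', b')"
    by (cases "quotient_of (of_int a / of_int b)")
  have b': "0 < b'" using quotient_of_denom_pos[OF q] .
  have "(of_int a / of_int b :: rat) = of_int a' / of_int b'" using quotient_of_div[OF q] .
  then have "(of_int (a' * b) :: rat) = of_int (a * b')" using b b' by (simp add: field_simps)
  then have cross: "a' * b = a * b'" by (simp only: of_int_eq_iff)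
  then have "a' \<noteq> 0" using a b b' by auto
  have "prime_elem (int p)" using p by simp
  then have "multiplicity (int p) a' + multiplicity (int p) b
      = multiplicity (int p) a + multiplicity (int p) b'"
    using arg_cong[OF cross, of "multiplicity (int p)"] \<open>a' \<noteq> 0\<close> a b b'
    by (simp add: prime_elem_multiplicity_mult_distrib)
  then show ?thesis unfolding ord_p_def q by simp
qed

lemma ord_p_div:
  assumes p: "prime p" and x: "x \<noteq> 0" and y: "y \<noteq> 0"
  shows "ord_p p (x / y) = ord_p p x - ord_p p y"
proof -
  obtain a b where qx: "quotient_of x = (a, b)" by (cases "quotient_of x")
  obtain c d where qy: "quotient_of y = (c, d)" by (cases "quotient_of y")
  have x_eq: "x = of_int a / of_int b" and y_eq: "y = of_int c / of_int d"
    using quotient_of_div[OF qx] quotient_of_div[OF qy] .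
  have "b > 0" "d > 0" using quotient_of_denom_pos[OF qx] quotient_of_denom_pos[OF qy] .
  moreover have "a \<noteq> 0" "c \<noteq> 0" using x y x_eq y_eq by auto
  moreover have "x / y = of_int (a * d) / of_int (b * c)"
    unfolding x_eq y_eq using calculation by (simp add: field_simps)
  moreover have "prime_elem (int p)" using p by simp
  ultimately show ?thesis
    using ord_p_of_int_div[OF p, of "a * d" "b * c"] ord_p_of_int_div[OF p, of a b]
      ord_p_of_int_div[OF p, of c d] x_eq y_eq
    by (simp add: prime_elem_multiplicity_mult_distrib)
qed

lemma power_int_le_power_int_iff:
  fixes x :: "'a::linordered_field"
  assumes "1 < x"
  shows "x powi m \<le> x powi n \<longleftrightarrow> m \<le> n"
  using power_int_increasing[of m n x] power_int_strict_increasing[of n m x] assms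
  by (meson less_imp_le not_le)

lemma padic_abs_le_iff:
  assumes p: "prime p" and "x \<noteq> 0" "y \<noteq> 0"
  shows "padic_abs p x \<le> padic_abs p y \<longleftrightarrow> ord_p p y \<le> ord_p p x"
  using assms prime_gt_1_nat[OF p] by (simp add: padic_abs_def power_int_le_power_int_iff)

lemma padic_abs_eq_0_iff: "prime p \<Longrightarrow> padic_abs p x = 0 \<longleftrightarrow> x = 0"
  by (simp add: padic_abs_def)

lemma padic_abs_nonneg: "0 \<le> padic_abs p x"
  by (simp add: padic_abs_def)

lemma seminorm_equiv_nonzero:
  fixes N :: "rat \<Rightarrow> 'a::{linorder,zero}" and M :: "rat \<Rightarrow> 'b::{linorder,zero}"
  assumes "\<And>x. N x = 0 \<longleftrightarrow> x = 0" "\<And>x. 0 \<le> N x"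
    and "\<And>x. M x = 0 \<longleftrightarrow> x = 0" "\<And>x. 0 \<le> M x"
    and "\<And>x y. x \<noteq> 0 \<Longrightarrow> y \<noteq> 0 \<Longrightarrow> N x \<le> N y \<longleftrightarrow> M x \<le> M y"
  shows "seminorm_equiv N M"
  unfolding seminorm_equiv_def using assms by (metis order.antisym)

locale nonarch_mult_seminorm =
  fixes N :: "rat \<Rightarrow> 'r::pos_tot_aura"
  assumes seminorm: "gen_seminorm N" and multiplicative: "multiplicative N"
    and non_archimedean: "non_archimedean N" and trivial_kernel: "trivial_kernel N"
begin

lemma N_0: "N 0 = 0" and N_1: "N 1 = 1"
  using seminorm by (simp_all add: gen_seminorm_def)

lemma N_mult: "N (a * b) = N a * N b"
  using multiplicative by (simp add: multiplicative_def)

lemma N_add_le_max: "N (a + b) \<le> max (N a) (N b)"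
  using non_archimedean by (simp add: non_archimedean_def)

lemma N_eq_0_iff: "N x = 0 \<longleftrightarrow> x = 0"
  using trivial_kernel N_0 by (auto simp: trivial_kernel_def)

lemma N_minus: "N (- x) = N x"
proof -
  have "N (-1) * N (-1) = 1" using N_mult[of "-1" "-1"] N_1 by simp
  then have "N (-1) = 1" by (simp add: aura_square_eq_one_iff)
  then show ?thesis using N_mult[of "-1" x] by simp
qed

lemma N_of_nat_le_one: "N (of_nat n) \<le> 1"
proof (induction n)
  case 0
  then show ?case using N_0 aura_nonneg[of 1] by simp
next
  case (Suc n)
  have "N (of_nat (Suc n)) = N (of_nat n + 1)" by (simp add: add.commute)
  also have "\<dots> \<le> max (N (of_nat n)) (N 1)" by (rule N_add_le_max)
  finally show ?case using Suc N_1 by simp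
qed

lemma N_of_int_le_one: "N (of_int n) \<le> 1"
  using N_of_nat_le_one[of "nat \<bar>n\<bar>"] N_minus[of "of_int n"]
  by (cases "n \<ge> 0") simp_all

lemma N_le_iff_div_le_one:
  assumes y: "y \<noteq> 0"
  shows "N x \<le> N y \<longleftrightarrow> N (x / y) \<le> 1"
proof -
  have "N x = N (x / y) * N y" using N_mult[of "x / y" y] y by simp
  then show ?thesis using aura_mult_le_cancel_right[of "N y" "N (x / y)" 1] y N_eq_0_iff by simp
qed

lemma integers_of_norm_lt_one_eq_dvd_prime:
  assumes "n \<noteq> 0" "N (of_int n) < 1"
  shows "\<exists>p. prime p \<and> (\<forall>k. N (of_int k) < 1 \<longleftrightarrow> int p dvd k)"
proof (rule int_prime_ideal_eq_dvd[where I = "\<lambda>k. N (of_int k) < 1"])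
  show "N (of_int (a + b)) < 1" if "N (of_int a) < 1" "N (of_int b) < 1" for a b
    using that N_add_le_max[of "of_int a" "of_int b"] by (simp add: order.strict_trans1)
  show "N (of_int (a * b)) < 1" if "N (of_int a) < 1" for a b
    using that aura_mult_left_le_one_le[OF N_of_int_le_one, of b "N (of_int a)"]
    by (simp add: N_mult mult.commute)
  show "N (of_int a) < 1 \<or> N (of_int b) < 1" if "N (of_int (a * b)) < 1" for a b
    using that N_of_int_le_one[of a] N_of_int_le_one[of b] by (auto simp: N_mult order_less_le)
qed (use assms N_1 in auto)

lemma N_mult_denominator:
  assumes "quotient_of x = (a, b)"
  shows "N x * N (of_int b) = N (of_int a)"
proof -
  have "x * of_int b = of_int a"
    using quotient_of_div[OF assms] quotient_of_denom_pos[OF assms] by simp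
  then show ?thesis by (metis N_mult)
qed

lemma N_le_one_iff_ord_p_nonneg:
  assumes p: "prime p" and p_ideal: "\<forall>k. N (of_int k) < 1 \<longleftrightarrow> int p dvd k"
  shows "N x \<le> 1 \<longleftrightarrow> 0 \<le> ord_p p x"
proof -
  obtain a b where q: "quotient_of x = (a, b)" by (cases "quotient_of x")
  have b: "b > 0" using quotient_of_denom_pos[OF q] .
  have Nx: "N x * N (of_int b) = N (of_int a)" using N_mult_denominator[OF q] .
  have N_eq_one: "N (of_int k) = 1" if "\<not> int p dvd k" for k
    using that p_ideal N_of_int_le_one[of k] by (meson order_less_le)
  have ord: "ord_p p x = int (multiplicity (int p) a) - int (multiplicity (int p) b)"
    unfolding ord_p_def q by simp
  have pe: "prime_elem (int p)" using p by simp
  show ?thesis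
  proof (cases "int p dvd b")
    case False
    then show ?thesis
      using Nx N_eq_one ord N_of_int_le_one[of a] by (simp add: not_dvd_imp_multiplicity_0)
  next
    case True
    \<comment> \<open>the reduced denominator carries the factor p, so the numerator cannot\<close>
    then have "\<not> int p dvd a"
      using quotient_of_coprime[OF q] pe prime_elem_not_unit coprime_common_divisor by blast
    then have "ord_p p x < 0"
      using ord True b pe by (simp add: not_dvd_imp_multiplicity_0 prime_multiplicity_gt_zero_iff)
    moreover have "\<not> N x \<le> 1"
      using Nx N_eq_one[OF \<open>\<not> int p dvd a\<close>] True p_ideal aura_mult_left_le_one_le
      by (metis not_le)
    ultimately show ?thesis by simp
  qed
qed

lemma N_le_iff_padic_abs_le:
  assumes p: "prime p" and p_ideal: "\<forall>k. N (of_int k) < 1 \<longleftrightarrow> int p dvd k"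
    and x: "x \<noteq> 0" and y: "y \<noteq> 0"
  shows "N x \<le> N y \<longleftrightarrow> padic_abs p x \<le> padic_abs p y"
proof -
  have "N x \<le> N y \<longleftrightarrow> N (x / y) \<le> 1" using N_le_iff_div_le_one[OF y] .
  also have "\<dots> \<longleftrightarrow> 0 \<le> ord_p p (x / y)" using N_le_one_iff_ord_p_nonneg[OF p p_ideal] .
  also have "\<dots> \<longleftrightarrow> ord_p p y \<le> ord_p p x" using ord_p_div[OF p x y] by simp
  also have "\<dots> \<longleftrightarrow> padic_abs p x \<le> padic_abs p y" using padic_abs_le_iff[OF p x y] by simp
  finally show ?thesis .
qed

lemma N_eq_one_if_trivial_on_integers:
  assumes "\<forall>k::int. k \<noteq> 0 \<longrightarrow> N (of_int k) = 1" and x: "x \<noteq> 0"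
  shows "N x = 1"
proof -
  obtain a b where q: "quotient_of x = (a, b)" by (cases "quotient_of x")
  have "a \<noteq> 0" "b \<noteq> 0"
    using x quotient_of_div[OF q] quotient_of_denom_pos[OF q] by auto
  then show ?thesis using N_mult_denominator[OF q] assms by simp
qed

end

theorem lemma3p9:
  fixes N :: "rat \<Rightarrow> 'r::pos_tot_aura"
  assumes "gen_seminorm N"
    and "multiplicative N"
    and "non_archimedean N"
    and "trivial_kernel N"
  shows "(\<exists>p. prime p \<and> seminorm_equiv N (padic_abs p)) \<or> seminorm_equiv N trivial_abs"
proof -
  interpret nonarch_mult_seminorm N using assms by unfold_locales
  note N_facts = N_eq_0_iff aura_nonneg
  show ?thesis
  proof (cases "\<exists>n::int. n \<noteq> 0 \<and> N (of_int n) < 1")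
    case True
    then obtain p where p: "prime p" and p_ideal: "\<forall>k. N (of_int k) < 1 \<longleftrightarrow> int p dvd k"
      using integers_of_norm_lt_one_eq_dvd_prime by blast
    have "seminorm_equiv N (padic_abs p)"
      by (rule seminorm_equiv_nonzero[OF N_facts padic_abs_eq_0_iff[OF p] padic_abs_nonneg
            N_le_iff_padic_abs_le[OF p p_ideal]])
    then show ?thesis using p by blast
  next
    case False
    then have "\<forall>k::int. k \<noteq> 0 \<longrightarrow> N (of_int k) = 1"
      using N_of_int_le_one by (metis order_less_le)
    then have "seminorm_equiv N trivial_abs"
      using N_eq_one_if_trivial_on_integers
      by (intro seminorm_equiv_nonzero[OF N_facts]) (auto simp: trivial_abs_def)
    then show ?thesis by blast
  qed
qed

end
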